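(* Let $\mathcal{C}=\{C_{\theta,t}:\theta\in\Theta,\ t\in\mathcal{T}\}$ be a class of prediction sets $C_{\theta,t}:\mathcal{X}\to 2^{\mathcal{Y}}$ with $\mathcal{T}\subset\mathbb{R}$, such that for each $\theta$ the family is nested ($t\le t'$ implies $C_{\theta,t}(x)\subseteq C_{\theta,t'}(x)$ for all $x$). Let $\ell_{\mathrm{eff}}(C;(x,y))$ be an efficiency loss that is non-decreasing in the set argument. Let $D_{\mathrm{cal}}=\{(x_i,y_i)\}_{i=1}^{n_{\mathrm{cal}}}$ be i.i.d. from a distribution of $(X,Y)$, let $\alpha\in(0,1)$, $\varepsilon_0\ge 0$, and let $(\hat\theta,\hat t)$ be a solution of $$\min_{\theta\in\Theta,t\in\mathcal{T}} \hat L_{\mathrm{eff}}(C_{\theta,t}) \quad\text{s.t.}\quad \hat L_{\mathrm{coverage}}(C_{\theta,t})\le \alpha+\varepsilon_0,$$ where $\hat L_{\mathrm{eff}}(C)=\frac1{n_{\mathrm{cal}}}\sum_i \ell_{\mathrm{eff}}(C;(x_i,y_i))$ and $\hat L_{\mathrm{coverage}}(C)=\frac1{n_{\mathrm{cal}}}\sum_i\mathbf{1}\{y_i\notin C(x_i)\}$. Let $L_{\mathrm{eff}}(C)=\mathbb{E}[\ell_{\mathrm{eff}}(C;(X,Y))]$, $L_{\mathrm{coverage}}(C)=\mathbb{P}(Y\notin C(X))$, and $$\varepsilon_{\mathrm{eff}}=\sup_{\theta\in\Theta,t\in\mathcal{T}}|\hat L_{\mathrm{eff}}(C_{\theta,t})-L_{\mathrm{eff}}(C_{\theta,t})|,\qquad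 \varepsilon_{\mathrm{coverage}}=\sup_{\theta\in\Theta,t\in\mathcal{T}}|\hat L_{\mathrm{coverage}}(C_{\theta,t})-L_{\mathrm{coverage}}(C_{\theta,t})|.$$ Then: (a) $L_{\mathrm{coverage}}(C_{\hat\theta,\hat t})\le \alpha+\varepsilon_0+\varepsilon_{\mathrm{coverage}}$; (b) if $\varepsilon_0\ge\varepsilon_{\mathrm{coverage}}$, then $$L_{\mathrm{eff}}(C_{\hat\theta,\hat t})\le \inf_{(\theta,t)\in\Theta\times\mathcal{T}:\ L_{\mathrm{coverage}}(C_{\theta,t})\le\alpha} L_{\mathrm{eff}}(C_{\theta,t})+2\varepsilon_{\mathrm{eff}}.$$
   Context: A prediction set is a map $C:\mathcal{X}\to 2^{\mathcal{Y}}$; $(X,Y)$ denotes a test example drawn from the same distribution as the calibration data. *)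

theory Defs
  imports "HOL-Probability.Probability"
begin

definition emp_eff :: "(('x \<Rightarrow> 'y set) \<Rightarrow> 'x \<times> 'y \<Rightarrow> real) \<Rightarrow> nat \<Rightarrow> (nat \<Rightarrow> 'x \<times> 'y)
    \<Rightarrow> ('x \<Rightarrow> 'y set) \<Rightarrow> real" where
  "emp_eff l n D C = (\<Sum>i<n. l C (D i)) / real n"

definition emp_cov :: "nat \<Rightarrow> (nat \<Rightarrow> 'x \<times> 'y) \<Rightarrow> ('x \<Rightarrow> 'y set) \<Rightarrow> real" where
  "emp_cov n D C = (\<Sum>i<n. if snd (D i) \<notin> C (fst (D i)) then 1 else 0) / real n"

definition pop_eff :: "('x \<times> 'y) measure \<Rightarrow> (('x \<Rightarrow> 'y set) \<Rightarrow> 'x \<times> 'y \<Rightarrow> real)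
    \<Rightarrow> ('x \<Rightarrow> 'y set) \<Rightarrow> real" where
  "pop_eff M l C = (\<integral>z. l C z \<partial>M)"

definition pop_cov :: "('x \<times> 'y) measure \<Rightarrow> ('x \<Rightarrow> 'y set) \<Rightarrow> real" where
  "pop_cov M C = measure M {z \<in> space M. snd z \<notin> C (fst z)}"

end

theory Submission
  imports Defs
begin

text \<open>The argument is deterministic and holds for every calibration sample: the independence
  and distribution hypotheses only matter for bounding the two uniform deviations, which the
  statement leaves symbolic. Part (a) is a single deviation step
  from the empirical constraint. For (b), \<open>\<epsilon>\<^sub>0 \<ge> \<epsilon>_coverage\<close> makes every population-feasible
  \<open>(\<theta>, t)\<close> empirically feasible, so the empirical minimiser competes with it, and the usual
  empirical risk minimisation bound costs one deviation on each side.\<close>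

definition uniform_dev :: "'i set \<Rightarrow> ('i \<Rightarrow> real) \<Rightarrow> ('i \<Rightarrow> real) \<Rightarrow> ereal" where
  "uniform_dev I f g = (SUP i\<in>I. ereal \<bar>f i - g i\<bar>)"

lemma uniform_dev_commute: "uniform_dev I f g = uniform_dev I g f"
  unfolding uniform_dev_def by (simp add: abs_minus_commute)

lemma abs_diff_le_uniform_dev: "i \<in> I \<Longrightarrow> ereal \<bar>f i - g i\<bar> \<le> uniform_dev I f g"
  unfolding uniform_dev_def by (rule SUP_upper)

lemma uniform_dev_nonneg:
  assumes "i \<in> I"
  shows "0 \<le> uniform_dev I f g"
  using abs_diff_le_uniform_dev[OF assms, of f g] by (rule order_trans[rotated]) simp

lemma le_plus_uniform_dev:
  assumes "i \<in> I"
  shows "ereal (g i) \<le> ereal (f i) + uniform_dev I f g"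
proof -
  have "ereal (g i) \<le> ereal (f i) + ereal \<bar>f i - g i\<bar>" by simp
  also have "\<dots> \<le> ereal (f i) + uniform_dev I f g"
    using abs_diff_le_uniform_dev[OF assms] by (rule add_left_mono)
  finally show ?thesis .
qed

lemma le_plus_uniform_dev_real:
  assumes "i \<in> I" "uniform_dev I f g \<le> ereal e"
  shows "g i \<le> f i + e"
  using order_trans[OF le_plus_uniform_dev[OF assms(1)] add_left_mono[OF assms(2)]] by simp

lemma erm_excess_risk_le:
  assumes x: "x \<in> I" and S: "S \<subseteq> I" and min: "\<And>i. i \<in> S \<Longrightarrow> emp x \<le> emp i"
  shows "ereal (pop x) \<le> (INF i\<in>S. ereal (pop i)) + 2 * uniform_dev I emp pop"
proof (cases "uniform_dev I emp pop")
  case (real e)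
  have "ereal (pop x - 2 * e) \<le> ereal (pop i)" if "i \<in> S" for i
  proof -
    have "pop x \<le> emp x + e"
      using le_plus_uniform_dev_real[OF x] real by simp
    moreover have "emp i \<le> pop i + e"
      using le_plus_uniform_dev_real[OF subsetD[OF S that]] real
      by (simp add: uniform_dev_commute)
    ultimately show ?thesis using min[OF that] by simp
  qed
  then have "ereal (pop x - 2 * e) \<le> (INF i\<in>S. ereal (pop i))"
    by (rule INF_greatest)
  then show ?thesis using real
    by (cases "INF i\<in>S. ereal (pop i)") auto
next
  case PInf
  then show ?thesis by simp
next
  case MInf
  then show ?thesis using uniform_dev_nonneg[OF x] by simp
qed

lemma constrained_erm_coverage_le:
  assumes "x \<in> I" "cemp x \<le> \<beta>"
  shows "ereal (cpop x) \<le> ereal \<beta> + uniform_dev I cemp cpop"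
proof -
  have "ereal (cpop x) \<le> ereal (cemp x) + uniform_dev I cemp cpop"
    by (rule le_plus_uniform_dev[OF assms(1)])
  also have "\<dots> \<le> ereal \<beta> + uniform_dev I cemp cpop"
    using assms(2) by (intro add_right_mono) simp
  finally show ?thesis .
qed

lemma constrained_erm_excess_risk_le:
  assumes x: "x \<in> I"
    and min: "\<And>i. i \<in> I \<Longrightarrow> cemp i \<le> \<alpha> + \<epsilon> \<Longrightarrow> emp x \<le> emp i"
    and dev: "uniform_dev I cemp cpop \<le> ereal \<epsilon>"
  shows "ereal (pop x) \<le> (INF i\<in>{i \<in> I. cpop i \<le> \<alpha>}. ereal (pop i)) + 2 * uniform_dev I emp pop"
proof (rule erm_excess_risk_le[OF x])
  fix i assume i: "i \<in> {i \<in> I. cpop i \<le> \<alpha>}"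
  then have "cemp i \<le> \<alpha> + \<epsilon>"
    using le_plus_uniform_dev_real[of i I cpop cemp \<epsilon>] dev by (auto simp: uniform_dev_commute)
  with i show "emp x \<le> emp i"
    using min by blast
qed auto

theorem proposition2:
  fixes P :: "'w measure" and M :: "('x \<times> 'y) measure"
    and Z :: "nat \<Rightarrow> 'w \<Rightarrow> 'x \<times> 'y" and n :: nat
    and C :: "'p \<Rightarrow> real \<Rightarrow> 'x \<Rightarrow> 'y set"
    and \<Theta> :: "'p set" and T :: "real set"
    and l :: "('x \<Rightarrow> 'y set) \<Rightarrow> 'x \<times> 'y \<Rightarrow> real"
    and \<alpha> \<epsilon>0 :: real
    and th :: "'w \<Rightarrow> 'p" and tt :: "'w \<Rightarrow> real"
  assumes P: "prob_space P" and M: "prob_space M"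
    and n: "n > 0"
    and Zmeas: "\<And>i. i < n \<Longrightarrow> Z i \<in> measurable P M"
    and Zdist: "\<And>i. i < n \<Longrightarrow> distr P M (Z i) = M"
    and Zindep: "prob_space.indep_vars P (\<lambda>_. M) Z {..<n}"
    and nested: "\<And>\<theta> t t' x. \<theta> \<in> \<Theta> \<Longrightarrow> t \<in> T \<Longrightarrow> t' \<in> T \<Longrightarrow> t \<le> t'
                   \<Longrightarrow> C \<theta> t x \<subseteq> C \<theta> t' x"
    and mono_l: "\<And>A B z. (\<And>x. A x \<subseteq> B x) \<Longrightarrow> l A z \<le> l B z"
    and l_int: "\<And>\<theta> t. \<theta> \<in> \<Theta> \<Longrightarrow> t \<in> T \<Longrightarrow> integrable M (l (C \<theta> t))"
    and cov_ev: "\<And>\<theta> t. \<theta> \<in> \<Theta> \<Longrightarrow> t \<in> T \<Longrightarrow>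
                   {z \<in> space M. snd z \<notin> C \<theta> t (fst z)} \<in> sets M"
    and alpha: "0 < \<alpha>" "\<alpha> < 1" and eps0: "0 \<le> \<epsilon>0"
    and sol: "\<And>\<omega>. \<omega> \<in> space P \<Longrightarrow>
         th \<omega> \<in> \<Theta> \<and> tt \<omega> \<in> T
       \<and> emp_cov n (\<lambda>i. Z i \<omega>) (C (th \<omega>) (tt \<omega>)) \<le> \<alpha> + \<epsilon>0
       \<and> (\<forall>\<theta>\<in>\<Theta>. \<forall>t\<in>T. emp_cov n (\<lambda>i. Z i \<omega>) (C \<theta> t) \<le> \<alpha> + \<epsilon>0 \<longrightarrow>
            emp_eff l n (\<lambda>i. Z i \<omega>) (C (th \<omega>) (tt \<omega>)) \<le> emp_eff l n (\<lambda>i. Z i \<omega>) (C \<theta> t))"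
  shows "\<forall>\<omega>\<in>space P.
     (let eps_eff = (SUP p\<in>\<Theta> \<times> T. ereal \<bar>emp_eff l n (\<lambda>i. Z i \<omega>) (C (fst p) (snd p))
                                          - pop_eff M l (C (fst p) (snd p))\<bar>);
          eps_cov = (SUP p\<in>\<Theta> \<times> T. ereal \<bar>emp_cov n (\<lambda>i. Z i \<omega>) (C (fst p) (snd p))
                                          - pop_cov M (C (fst p) (snd p))\<bar>)
      in ereal (pop_cov M (C (th \<omega>) (tt \<omega>))) \<le> ereal (\<alpha> + \<epsilon>0) + eps_cov
       \<and> (eps_cov \<le> ereal \<epsilon>0 \<longrightarrow>
            ereal (pop_eff M l (C (th \<omega>) (tt \<omega>)))
              \<le> (INF p\<in>{p\<in>\<Theta> \<times> T. pop_cov M (C (fst p) (snd p)) \<le> \<alpha>}.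
                    ereal (pop_eff M l (C (fst p) (snd p)))) + 2 * eps_eff))"
  unfolding Let_def uniform_dev_def[symmetric]
proof
  fix \<omega> assume "\<omega> \<in> space P"
  let ?I = "\<Theta> \<times> T"
  let ?emp_cov = "\<lambda>p. emp_cov n (\<lambda>i. Z i \<omega>) (C (fst p) (snd p))"
  let ?pop_cov = "\<lambda>p. pop_cov M (C (fst p) (snd p))"
  let ?emp_eff = "\<lambda>p. emp_eff l n (\<lambda>i. Z i \<omega>) (C (fst p) (snd p))"
  let ?pop_eff = "\<lambda>p. pop_eff M l (C (fst p) (snd p))"
  let ?hat = "(th \<omega>, tt \<omega>)"
  have hat: "?hat \<in> ?I" "?emp_cov ?hat \<le> \<alpha> + \<epsilon>0"
    and hat_min: "\<And>p. p \<in> ?I \<Longrightarrow> ?emp_cov p \<le> \<alpha> + \<epsilon>0 \<Longrightarrow> ?emp_eff ?hat \<le> ?emp_eff p"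
    using sol[OF \<open>\<omega> \<in> space P\<close>] by auto
  show "ereal (pop_cov M (C (th \<omega>) (tt \<omega>))) \<le> ereal (\<alpha> + \<epsilon>0) + uniform_dev ?I ?emp_cov ?pop_cov
    \<and> (uniform_dev ?I ?emp_cov ?pop_cov \<le> ereal \<epsilon>0 \<longrightarrow>
         ereal (pop_eff M l (C (th \<omega>) (tt \<omega>))) \<le> (INF p\<in>{p \<in> ?I. ?pop_cov p \<le> \<alpha>}. ereal (?pop_eff p))
                                  + 2 * uniform_dev ?I ?emp_eff ?pop_eff)"
    using constrained_erm_coverage_le[where cemp = ?emp_cov and cpop = ?pop_cov, OF hat]
      constrained_erm_excess_risk_le[where cemp = ?emp_cov and cpop = ?pop_cov
        and emp = ?emp_eff and pop = ?pop_eff, OF hat(1) hat_min]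
    unfolding fst_conv snd_conv by blast
qed

end
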